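(* Let $\beta\in\mathbb{R}^3$ with $\|\beta\|\le 1$ and $\rho=\frac12(I_2+\sum_{i=1}^3\beta_i\sigma_i)$. Then: (i) A matrix $P=\frac14\big(I_4+\sum_i\beta_i\sigma_i\otimes I_2+\sum_i\gamma_i I_2\otimes\sigma_i+\sum_{l,k}\delta_{lk}\sigma_l\otimes\sigma_k\big)$ (with this given $\beta$, and $\gamma\in\mathbb{R}^3$, $\delta\in M_3(\mathbb{R})$) is a purification of $\rho$ if and only if $\gamma=\delta^T\beta$ and $\delta$ solves the system $$\delta\delta^T=(1-\|\beta\|^2)I_3+\beta\beta^T,\qquad \det\delta=\|\beta\|^2-1,$$ and every purification of $\rho$ is of this form. (ii) This system always has a solution, and if $\tilde\delta$ is any one solution, then the set of all solutions is exactly $\{\tilde\delta S: S\in SO(3,\mathbb{R})\}$. (iii) Consequently, when $\|\beta\|<1$ the set of purifications of $\rho$ is in bijection with $SO(3,\mathbb{R})$ (via $S\mapsto$ the purification with $\delta=\tilde\delta S$), and when $\|\beta\|=1$ it is in bijection with the unit sphere $S^2\subset\mathbb{R}^3$.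
   Context: $\sigma_1,\sigma_2,\sigma_3$ are the Pauli matrices. A pure state on $\mathbb{C}^2\otimes\mathbb{C}^2$ is a positive semidefinite trace-one matrix that is a projection. A purification of a $2\times2$ density matrix $\rho$ is a pure state $P$ on $\mathbb{C}^2\otimes\mathbb{C}^2$ whose partial trace over the second tensor factor equals $\rho$. For $P=\frac14\big(I_4+\sum_i\beta_i\sigma_i\otimes I_2+\sum_i\gamma_i I_2\otimes\sigma_i+\sum_{l,k}\delta_{lk}\sigma_l\otimes\sigma_k\big)$ the partial trace over the second factor is $\frac12(I_2+\sum_i\beta_i\sigma_i)$ and over the first factor is $\frac12(I_2+\sum_i\gamma_i\sigma_i)$. *)

theory Defs
  imports "HOL-Analysis.Analysis"
begin

text \<open>Complex 2x2 matrices are indexed by the two-element type 2; the space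
  C^2 (x) C^2 is indexed by the product type 2 \<times> 2, so 4x4 matrices on the
  tensor product have type complex^(2\<times>2)^(2\<times>2).\<close>

type_synonym cmat2 = "complex^2^2"
type_synonym cmat4 = "complex^(2 \<times> 2)^(2 \<times> 2)"

text \<open>Pauli matrices sigma_1, sigma_2, sigma_3 (indices 1, 2, 3 of type 3; the basis of C^2 is ordered 0, 1 (type 2);
  note 3 = 0 in type 3).\<close>
definition pauli :: "3 \<Rightarrow> cmat2" where
  "pauli k =
     (if k = 1 then (\<chi> i j. if i = j then 0 else 1)
      else if k = 2 then (\<chi> i j. if i = j then 0 else if i = 0 then - \<i> else \<i>)
      else (\<chi> i j. if i = j then (if i = 0 then 1 else -1) else 0))"

definition kron :: "cmat2 \<Rightarrow> cmat2 \<Rightarrow> cmat4" where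
  "kron A B = (\<chi> p q. A $ fst p $ fst q * B $ snd p $ snd q)"

definition ptrace2 :: "cmat4 \<Rightarrow> cmat2" where
  "ptrace2 M = (\<chi> i k. \<Sum>j\<in>UNIV. M $ (i,j) $ (k,j))"

definition cadjoint :: "complex^'n^'n \<Rightarrow> complex^'n^'n" where
  "cadjoint M = (\<chi> i j. cnj (M $ j $ i))"

definition hermitian :: "complex^'n^'n \<Rightarrow> bool" where
  "hermitian M \<longleftrightarrow> cadjoint M = M"

definition psd :: "complex^'n^'n \<Rightarrow> bool" where
  "psd M \<longleftrightarrow> hermitian M \<and>
     (\<forall>x :: complex^'n. 0 \<le> Re (\<Sum>i\<in>UNIV. \<Sum>j\<in>UNIV. cnj (x $ i) * M $ i $ j * x $ j))"

definition pure_state :: "cmat4 \<Rightarrow> bool" where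
  "pure_state P \<longleftrightarrow> psd P \<and> trace P = 1 \<and> hermitian P \<and> P ** P = P"

definition purification :: "cmat2 \<Rightarrow> cmat4 \<Rightarrow> bool" where
  "purification \<rho> P \<longleftrightarrow> pure_state P \<and> ptrace2 P = \<rho>"

definition rho :: "real^3 \<Rightarrow> cmat2" where
  "rho \<beta> = (\<chi> a b. (1/2) * ((mat 1 :: cmat2) $ a $ b
                 + (\<Sum>i\<in>UNIV. complex_of_real (\<beta> $ i) * pauli i $ a $ b)))"

definition Pmat :: "real^3 \<Rightarrow> real^3 \<Rightarrow> real^3^3 \<Rightarrow> cmat4" where
  "Pmat \<beta> \<gamma> \<delta> = (\<chi> a b. (1/4) * ((mat 1 :: cmat4) $ a $ b
      + (\<Sum>i\<in>UNIV. complex_of_real (\<beta> $ i) * kron (pauli i) (mat 1) $ a $ b)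
      + (\<Sum>i\<in>UNIV. complex_of_real (\<gamma> $ i) * kron (mat 1) (pauli i) $ a $ b)
      + (\<Sum>l\<in>UNIV. \<Sum>k\<in>UNIV. complex_of_real (\<delta> $ l $ k) * kron (pauli l) (pauli k) $ a $ b)))"

definition outer :: "real^3 \<Rightarrow> real^3 \<Rightarrow> real^3^3" where
  "outer u v = (\<chi> i j. u $ i * v $ j)"

definition delta_system :: "real^3 \<Rightarrow> real^3^3 \<Rightarrow> bool" where
  "delta_system \<beta> \<delta> \<longleftrightarrow>
     \<delta> ** transpose \<delta> = (1 - (norm \<beta>)\<^sup>2) *\<^sub>R mat 1 + outer \<beta> \<beta>
     \<and> det \<delta> = (norm \<beta>)\<^sup>2 - 1"

end

theory Submission
  imports Defs
begin

(*
  Expand a Hermitian 4x4 matrix in the real basis \<sigma>\<^sub>a \<otimes> \<sigma>\<^sub>b (\<sigma>\<^sub>0 = I). Hermiticity,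
  unit trace and the partial trace condition only concern the coefficients of I and of
  \<sigma>\<^sub>i \<otimes> I, and Hermitian projections are automatically positive, so Pmat \<beta> \<gamma> \<delta> purifies
  rho \<beta> exactly when it is idempotent. By the product rules of the Pauli matrices, P\<^sup>2 = P
  amounts to \<delta> \<gamma> = \<beta>, \<delta>\<^sup>T \<beta> = \<gamma>, \<delta> = \<beta> \<gamma>\<^sup>T - cof \<delta> and a trace condition.
  Multiplying the third equation by \<delta>\<^sup>T and using cof \<delta> \<delta>\<^sup>T = det \<delta> I gives the system
  for \<delta>, and conversely.

  All solutions \<delta> share the Gram matrix \<delta> \<delta>\<^sup>T and the determinant. For |\<beta>| < 1 they are
  invertible, so any two differ by a right factor in SO(3). For |\<beta>| = 1 the Gram matrix is
  \<beta> \<beta>\<^sup>T, which forces \<delta> = \<beta> g\<^sup>T with |g| = 1, and SO(3) acts transitively on such g.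
*)

section \<open>Matrix identities in dimension three\<close>

text \<open>Indices of type \<open>3\<close> are taken modulo 3, so \<open>cofactor3 A\<close> is the matrix of
  cofactors of \<open>A\<close>.\<close>
definition cofactor3 :: "real^3^3 \<Rightarrow> real^3^3" where
  "cofactor3 A = (\<chi> i j. A$(i+1)$(j+1) * A$(i+2)$(j+2) - A$(i+1)$(j+2) * A$(i+2)$(j+1))"

lemma numeral_4_5_mod_3: "(4::3) = 1" "(5::3) = 2"
  by simp_all

lemmas matrix3_simps = vec_eq_iff forall_3 sum_3 matrix_matrix_mult_def matrix_vector_mult_def
  transpose_def outer_def cofactor3_def numeral_4_5_mod_3 mat_def det_3 inner_vec_def trace_def

lemma matrix_diff_rdistrib:
  fixes A :: "'a::ring_1^'n^'m"
  shows "(A - B) ** C = A ** C - B ** C"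
  by (vector matrix_matrix_mult_def sum_subtractf[symmetric] algebra_simps)

lemma mult_transpose_self_eq_0_iff:
  fixes A :: "real^'n^'m"
  shows "A ** transpose A = 0 \<longleftrightarrow> A = 0"
proof
  assume "A ** transpose A = 0"
  then have "A $ i \<bullet> A $ i = 0" for i
    unfolding vec_eq_iff by (simp add: matrix_matrix_mult_def transpose_def inner_vec_def)
  then show "A = 0"
    by (simp add: vec_eq_iff)
qed simp

lemma outer_mult_vector: "outer u v *v w = (v \<bullet> w) *\<^sub>R u"
  by (simp add: matrix3_simps algebra_simps)

lemma outer_mult_transpose: "outer u v ** transpose A = outer u (A *v v)"
  by (simp add: matrix3_simps algebra_simps)

lemma transpose_outer: "transpose (outer u v) = outer v u"
  by (simp add: matrix3_simps)

lemma outer_mult_outer: "outer u v ** outer v' w = (v \<bullet> v') *\<^sub>R outer u w"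
  by (simp add: matrix3_simps algebra_simps)

lemma mult_transpose_diff_outer:
  fixes A :: "real^3^3"
  shows "(A - outer u v) ** transpose (A - outer u v)
    = A ** transpose A - outer (A *v v) u - outer u (A *v v) + (v \<bullet> v) *\<^sub>R outer u u"
  by (simp add: matrix3_simps algebra_simps)

lemma trace_scaleR_mat_add_outer: "trace (s *\<^sub>R mat 1 + t *\<^sub>R outer u u) = 3 * s + t * (u \<bullet> u)"
  by (simp add: matrix3_simps algebra_simps)

lemma cofactor3_mult_transpose: "cofactor3 A ** transpose A = det A *\<^sub>R mat 1"
  by (simp add: matrix3_simps algebra_simps)

lemma transpose_mult_cofactor3: "transpose A ** cofactor3 A = det A *\<^sub>R mat 1"
  by (simp add: matrix3_simps algebra_simps)

lemma cofactor3_outer: "cofactor3 (outer u v) = 0"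
  by (simp add: matrix3_simps)

lemma det_outer3: "det (outer u v :: real^3^3) = 0"
  by (simp add: matrix3_simps algebra_simps)

lemma det3_uminus: "det (- A :: real^3^3) = - det A"
  by (simp add: matrix3_simps)

lemma det3_scaleR_mat_add_outer:
  "det (s *\<^sub>R mat 1 + t *\<^sub>R outer u u :: real^3^3) = s^2 * (s + t * (u \<bullet> u))"
  by (simp add: matrix3_simps algebra_simps power2_eq_square)

lemma gram_det_mult_rotation:
  fixes A S :: "real^'n^'n"
  assumes "rotation_matrix S"
  shows "(A ** S) ** transpose (A ** S) = A ** transpose A" and "det (A ** S) = det A"
proof -
  have "S ** transpose S = mat 1" and "det S = 1"
    using assms unfolding rotation_matrix_def orthogonal_matrix_def by auto
  moreover have "(A ** S) ** transpose (A ** S) = A ** (S ** transpose S) ** transpose A"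
    by (simp add: matrix_transpose_mul matrix_mul_assoc)
  ultimately show "(A ** S) ** transpose (A ** S) = A ** transpose A" and "det (A ** S) = det A"
    by (simp_all add: det_mul)
qed

lemma rotation_factor_if_same_gram:
  fixes A B :: "real^'n^'n"
  assumes gram: "A ** transpose A = B ** transpose B" and det: "det A = det B" "det A \<noteq> 0"
  obtains S where "rotation_matrix S" "B = A ** S"
proof -
  obtain A' where A'A: "A' ** A = mat 1"
    using det(2) invertible_det_nz invertible_left_inverse by blast
  then have AA': "A ** A' = mat 1"
    using matrix_left_right_inverse by blast
  define S where "S = A' ** B"
  have "S ** transpose S = A' ** (B ** transpose B) ** transpose A'"
    unfolding S_def by (simp add: matrix_transpose_mul matrix_mul_assoc)
  also have "\<dots> = (A' ** A) ** transpose (A' ** A)"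
    unfolding gram[symmetric] by (simp add: matrix_transpose_mul matrix_mul_assoc)
  finally have "S ** transpose S = mat 1"
    by (simp add: A'A)
  then have "orthogonal_matrix S"
    unfolding orthogonal_matrix_def using matrix_left_right_inverse by blast
  moreover have B: "B = A ** S"
    unfolding S_def by (simp add: matrix_mul_assoc AA')
  moreover from B have "det S = 1"
    using det by (simp add: det_mul)
  ultimately show thesis
    using that unfolding rotation_matrix_def by blast
qed

lemma rotation_matrix_transpose_maps:
  fixes u v :: "real^'n"
  assumes "2 \<le> CARD('n)" and "norm v = norm u"
  obtains S where "rotation_matrix S" "transpose S *v v = u"
proof -
  obtain f where f: "orthogonal_transformation f" "det (matrix f) = 1" "f v = u"
    using rotation_exists[OF assms] .
  then have "linear f" "orthogonal_matrix (matrix f)"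
    using orthogonal_transformation_matrix by auto
  then show thesis
    using that[of "transpose (matrix f)"] f(2,3) by (simp add: rotation_matrix_def matrix_works)
qed

section \<open>Expansion of 4x4 matrices in the Pauli basis\<close>

definition pauli_expansion :: "real \<Rightarrow> real^3 \<Rightarrow> real^3 \<Rightarrow> real^3^3 \<Rightarrow> cmat4" where
  "pauli_expansion c x y z = (\<chi> a b. complex_of_real c * (mat 1 :: cmat4) $ a $ b
      + (\<Sum>i\<in>UNIV. complex_of_real (x $ i) * kron (pauli i) (mat 1) $ a $ b)
      + (\<Sum>i\<in>UNIV. complex_of_real (y $ i) * kron (mat 1) (pauli i) $ a $ b)
      + (\<Sum>l\<in>UNIV. \<Sum>k\<in>UNIV. complex_of_real (z $ l $ k) * kron (pauli l) (pauli k) $ a $ b))"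

lemma sum_UNIV_2x2: "sum f (UNIV :: (2 \<times> 2) set) = f (1,1) + f (1,2) + f (2,1) + f (2,2)"
  by (simp add: UNIV_Times_UNIV[symmetric] UNIV_2 sum.cartesian_product[symmetric] add.assoc)

lemmas pauli_expansion_simps = pauli_expansion_def kron_def pauli_def mat_def sum_3

lemma Pmat_eq_pauli_expansion:
  "Pmat \<beta> \<gamma> \<delta> = pauli_expansion (1/4) ((1/4) *\<^sub>R \<beta>) ((1/4) *\<^sub>R \<gamma>) ((1/4) *\<^sub>R \<delta>)"
  by (simp add: vec_eq_iff split_paired_All forall_2 pauli_expansion_simps Pmat_def)

lemma pauli_expansion_eq_iff:
  "pauli_expansion c x y z = pauli_expansion c' x' y' z' \<longleftrightarrow> c = c' \<and> x = x' \<and> y = y' \<and> z = z'"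
proof
  assume "pauli_expansion c x y z = pauli_expansion c' x' y' z'"
  then have "\<forall>a b. Re (pauli_expansion c x y z $ a $ b) = Re (pauli_expansion c' x' y' z' $ a $ b) \<and>
     Im (pauli_expansion c x y z $ a $ b) = Im (pauli_expansion c' x' y' z' $ a $ b)"
    by simp
  then show "c = c' \<and> x = x' \<and> y = y' \<and> z = z'"
    unfolding split_paired_All forall_2
    by (simp add: pauli_expansion_simps vec_eq_iff forall_3)
qed simp

lemma hermitian_pauli_expansion: "hermitian (pauli_expansion c x y z)"
  unfolding hermitian_def cadjoint_def
  by (simp add: vec_eq_iff split_paired_All forall_2 pauli_expansion_simps complex_eq_iff)

lemma trace_pauli_expansion: "trace (pauli_expansion c x y z) = complex_of_real (4 * c)"
  by (simp add: trace_def sum_UNIV_2x2 pauli_expansion_simps complex_eq_iff)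

lemma ptrace2_pauli_expansion: "ptrace2 (pauli_expansion (1/4) x y z) = rho (4 *\<^sub>R x)"
  unfolding ptrace2_def rho_def
  by (simp add: vec_eq_iff forall_2 sum_2 pauli_expansion_simps complex_eq_iff)

lemma rho_eq_iff: "rho \<beta> = rho \<beta>' \<longleftrightarrow> \<beta> = \<beta>'"
proof
  assume "rho \<beta> = rho \<beta>'"
  then have "\<forall>a b. Re (rho \<beta> $ a $ b) = Re (rho \<beta>' $ a $ b) \<and> Im (rho \<beta> $ a $ b) = Im (rho \<beta>' $ a $ b)"
    by simp
  then show "\<beta> = \<beta>'"
    unfolding forall_2 by (simp add: rho_def pauli_def mat_def sum_3 vec_eq_iff forall_3)
qed simp

text \<open>The 16 matrices \<open>\<sigma>\<^sub>a \<otimes> \<sigma>\<^sub>b\<close> are orthogonal for the trace form, so the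
  coefficients of \<open>M\<close> are \<open>Re (tr ((\<sigma>\<^sub>a \<otimes> \<sigma>\<^sub>b) M)) / 4\<close>.\<close>
lemma hermitian_imp_pauli_expansion:
  assumes "hermitian M"
  obtains c x y z where "M = pauli_expansion c x y z"
proof -
  define coeff where "coeff A = Re (\<Sum>p\<in>UNIV. \<Sum>q\<in>UNIV. A $ p $ q * M $ q $ p) / 4" for A :: cmat4
  from assms have "\<forall>a b. M $ a $ b = cnj (M $ b $ a)"
    unfolding hermitian_def cadjoint_def vec_eq_iff by simp
  then have "\<forall>a b. Re (M $ a $ b) = Re (M $ b $ a) \<and> Im (M $ a $ b) = - Im (M $ b $ a)"
    by (metis cnj.sel)
  note symmetry = this[unfolded split_paired_All forall_2]
  have "M = pauli_expansion (coeff (mat 1)) (\<chi> i. coeff (kron (pauli i) (mat 1)))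
      (\<chi> i. coeff (kron (mat 1) (pauli i))) (\<chi> l k. coeff (kron (pauli l) (pauli k)))"
    by (simp add: vec_eq_iff split_paired_All forall_2 pauli_expansion_simps coeff_def sum_UNIV_2x2
        complex_eq_iff) (insert symmetry, argo)
  then show thesis by (rule that)
qed

text \<open>The cofactors come from the product rule \<open>\<sigma>\<^sub>l \<sigma>\<^sub>k = \<delta>\<^sub>l\<^sub>k I + i \<epsilon>\<^sub>l\<^sub>k\<^sub>m \<sigma>\<^sub>m\<close>:
  summing \<open>\<epsilon>(l, l', m) \<epsilon>(k, k', n) z(l, k) z(l', k')\<close> over \<open>l, l', k, k'\<close> gives twice the
  \<open>(m, n)\<close> cofactor of \<open>z\<close>.\<close>
lemma pauli_expansion_square:
  "pauli_expansion c x y z ** pauli_expansion c x y z =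
     pauli_expansion (c\<^sup>2 + x \<bullet> x + y \<bullet> y + trace (z ** transpose z))
       (2 * c *\<^sub>R x + 2 *\<^sub>R (z *v y)) (2 * c *\<^sub>R y + 2 *\<^sub>R (transpose z *v x))
       (2 * c *\<^sub>R z + 2 *\<^sub>R outer x y - 2 *\<^sub>R cofactor3 z)"
  apply (simp add: vec_eq_iff split_paired_All forall_2 matrix_matrix_mult_def sum_UNIV_2x2)
  apply (simp add: pauli_expansion_simps cofactor3_def numeral_4_5_mod_3 outer_def
      matrix_vector_mult_def vector_matrix_mult_def transpose_def inner_vec_def trace_def complex_eq_iff)
  apply (simp add: algebra_simps power2_eq_square)
  done

section \<open>Purifications and the system for \<open>\<delta>\<close>\<close>

lemma psd_if_hermitian_idempotent:
  fixes P :: "complex^'n^'n"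
  assumes herm: "hermitian P" and idem: "P ** P = P"
  shows "psd P"
proof -
  have P: "P = cadjoint P ** P"
    using herm idem unfolding hermitian_def by simp
  have "0 \<le> Re (\<Sum>i\<in>UNIV. \<Sum>j\<in>UNIV. cnj (x $ i) * P $ i $ j * x $ j)" for x :: "complex^'n"
  proof -
    have "(\<Sum>i\<in>UNIV. \<Sum>j\<in>UNIV. cnj (x $ i) * P $ i $ j * x $ j)
        = (\<Sum>i\<in>UNIV. \<Sum>j\<in>UNIV. \<Sum>k\<in>UNIV. cnj (x $ i) * cnj (P $ k $ i) * P $ k $ j * x $ j)"
      by (subst P) (simp add: matrix_matrix_mult_def cadjoint_def sum_distrib_left
          sum_distrib_right mult.assoc)
    also have "\<dots> = (\<Sum>i\<in>UNIV. \<Sum>k\<in>UNIV. \<Sum>j\<in>UNIV. cnj (x $ i) * cnj (P $ k $ i) * P $ k $ j * x $ j)"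
      by (rule sum.cong[OF refl], rule sum.swap)
    also have "\<dots> = (\<Sum>k\<in>UNIV. \<Sum>i\<in>UNIV. \<Sum>j\<in>UNIV. cnj (x $ i) * cnj (P $ k $ i) * P $ k $ j * x $ j)"
      by (rule sum.swap)
    also have "\<dots> = (\<Sum>k\<in>UNIV. cnj ((P *v x) $ k) * (P *v x) $ k)"
      unfolding matrix_vector_mult_def
      by (simp add: sum_product mult_ac) (rule sum.cong[OF refl], rule sum.swap)
    finally have "Re (\<Sum>i\<in>UNIV. \<Sum>j\<in>UNIV. cnj (x $ i) * P $ i $ j * x $ j)
        = (\<Sum>k\<in>UNIV. (Re ((P *v x) $ k))\<^sup>2 + (Im ((P *v x) $ k))\<^sup>2)"
      by (simp add: power2_eq_square)
    then show ?thesis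
      by (simp add: sum_nonneg)
  qed
  then show ?thesis
    unfolding psd_def using herm by blast
qed

lemma Pmat_eq_iff: "Pmat \<beta> \<gamma> \<delta> = Pmat \<beta> \<gamma>' \<delta>' \<longleftrightarrow> \<gamma> = \<gamma>' \<and> \<delta> = \<delta>'"
  by (simp add: Pmat_eq_pauli_expansion pauli_expansion_eq_iff)

lemma purification_Pmat_iff_idempotent:
  "purification (rho \<beta>) (Pmat \<beta> \<gamma> \<delta>) \<longleftrightarrow> Pmat \<beta> \<gamma> \<delta> ** Pmat \<beta> \<gamma> \<delta> = Pmat \<beta> \<gamma> \<delta>"
proof -
  have "hermitian (Pmat \<beta> \<gamma> \<delta>)"
    unfolding Pmat_eq_pauli_expansion by (rule hermitian_pauli_expansion)
  moreover have "trace (Pmat \<beta> \<gamma> \<delta>) = 1" and "ptrace2 (Pmat \<beta> \<gamma> \<delta>) = rho \<beta>"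
    unfolding Pmat_eq_pauli_expansion trace_pauli_expansion ptrace2_pauli_expansion by simp_all
  ultimately show ?thesis
    unfolding purification_def pure_state_def using psd_if_hermitian_idempotent by blast
qed

lemma Pmat_idempotent_iff:
  "Pmat \<beta> \<gamma> \<delta> ** Pmat \<beta> \<gamma> \<delta> = Pmat \<beta> \<gamma> \<delta> \<longleftrightarrow>
    1 + \<beta> \<bullet> \<beta> + \<gamma> \<bullet> \<gamma> + trace (\<delta> ** transpose \<delta>) = 4 \<and> \<delta> *v \<gamma> = \<beta> \<and>
    transpose \<delta> *v \<beta> = \<gamma> \<and> outer \<beta> \<gamma> - cofactor3 \<delta> = \<delta>"
proof -
  have square: "Pmat \<beta> \<gamma> \<delta> ** Pmat \<beta> \<gamma> \<delta> =
    pauli_expansion ((1 + \<beta> \<bullet> \<beta> + \<gamma> \<bullet> \<gamma> + trace (\<delta> ** transpose \<delta>)) / 16)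
      ((1/8) *\<^sub>R (\<beta> + \<delta> *v \<gamma>)) ((1/8) *\<^sub>R (\<gamma> + transpose \<delta> *v \<beta>))
      ((1/8) *\<^sub>R (\<delta> + (outer \<beta> \<gamma> - cofactor3 \<delta>)))"
    unfolding Pmat_eq_pauli_expansion pauli_expansion_square pauli_expansion_eq_iff
    by (intro conjI) (simp_all add: matrix3_simps vector_matrix_mult_def field_simps power2_eq_square)
  have half: "(1/8) *\<^sub>R (a + w) = (1/4) *\<^sub>R a \<longleftrightarrow> w = a" for a w :: "'a::real_vector"
  proof -
    have "(1/8) *\<^sub>R (a + w) = (1/4) *\<^sub>R a \<longleftrightarrow> (1/8) *\<^sub>R (a + w) = (1/8::real) *\<^sub>R (2 *\<^sub>R a)"
      by simp
    also have "\<dots> \<longleftrightarrow> a + w = 2 *\<^sub>R a"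
      by (subst scaleR_cancel_left) simp
    also have "\<dots> \<longleftrightarrow> w = a"
      by (simp add: scaleR_2)
    finally show ?thesis .
  qed
  show ?thesis
    unfolding square unfolding Pmat_eq_pauli_expansion pauli_expansion_eq_iff half by auto
qed

lemma delta_system_iff:
  "delta_system \<beta> \<delta> \<longleftrightarrow>
    \<delta> ** transpose \<delta> = (1 - \<beta> \<bullet> \<beta>) *\<^sub>R mat 1 + outer \<beta> \<beta> \<and> det \<delta> = \<beta> \<bullet> \<beta> - 1"
  by (simp add: delta_system_def power2_norm_eq_inner)

lemma delta_system_if_idempotency_equations:
  assumes trace: "1 + \<beta> \<bullet> \<beta> + \<gamma> \<bullet> \<gamma> + trace (\<delta> ** transpose \<delta>) = 4"
    and \<beta>: "\<delta> *v \<gamma> = \<beta>" and \<gamma>: "transpose \<delta> *v \<beta> = \<gamma>"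
    and \<delta>: "outer \<beta> \<gamma> - cofactor3 \<delta> = \<delta>"
  shows "delta_system \<beta> \<delta>"
proof -
  have gram: "\<delta> ** transpose \<delta> = outer \<beta> \<beta> - det \<delta> *\<^sub>R mat 1"
    by (subst (1) \<delta>[symmetric])
      (simp add: matrix_diff_rdistrib outer_mult_transpose cofactor3_mult_transpose \<beta>)
  have "\<gamma> \<bullet> \<gamma> = \<beta> \<bullet> \<beta>"
    using \<beta> \<gamma> dot_lmul_matrix[of \<beta> \<delta> \<gamma>] by simp
  moreover have "trace (\<delta> ** transpose \<delta>) = \<beta> \<bullet> \<beta> - 3 * det \<delta>"
    using trace_scaleR_mat_add_outer[of "- det \<delta>" 1 \<beta>] by (simp add: gram)
  ultimately have "det \<delta> = \<beta> \<bullet> \<beta> - 1"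
    using trace by linarith
  with gram show ?thesis
    by (simp add: delta_system_iff algebra_simps)
qed

lemma rank_one_if_mult_transpose_eq_outer:
  fixes \<delta> :: "real^3^3"
  assumes gram: "\<delta> ** transpose \<delta> = outer \<beta> \<beta>" and unit: "\<beta> \<bullet> \<beta> = 1"
  shows "\<delta> = outer \<beta> (transpose \<delta> *v \<beta>)" and "norm (transpose \<delta> *v \<beta>) = 1"
proof -
  define g where "g = transpose \<delta> *v \<beta>"
  have \<delta>g: "\<delta> *v g = \<beta>"
    unfolding g_def matrix_vector_mul_assoc gram outer_mult_vector unit by simp
  have gg: "g \<bullet> g = 1"
    using \<delta>g unit dot_lmul_matrix[of \<beta> \<delta> g] by (simp add: g_def)
  have "(\<delta> - outer \<beta> g) ** transpose (\<delta> - outer \<beta> g) = 0"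
    unfolding mult_transpose_diff_outer gram \<delta>g gg by simp
  then show "\<delta> = outer \<beta> (transpose \<delta> *v \<beta>)"
    unfolding mult_transpose_self_eq_0_iff g_def by simp
  show "norm (transpose \<delta> *v \<beta>) = 1"
    using gg by (simp add: g_def norm_eq_sqrt_inner)
qed

text \<open>If \<open>det \<delta> \<noteq> 0\<close>, multiplying \<open>(outer \<beta> \<gamma> - cofactor3 \<delta> - \<delta>) ** transpose \<delta> = 0\<close> by
  \<open>cofactor3 \<delta>\<close> gives the last equation; if \<open>det \<delta> = 0\<close>, then \<open>|\<beta>| = 1\<close> and \<open>\<delta>\<close> has rank one.\<close>
lemma idempotency_equations_if_delta_system:
  assumes sys: "delta_system \<beta> \<delta>" and \<gamma>: "\<gamma> = transpose \<delta> *v \<beta>"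
  shows "1 + \<beta> \<bullet> \<beta> + \<gamma> \<bullet> \<gamma> + trace (\<delta> ** transpose \<delta>) = 4"
    and "\<delta> *v \<gamma> = \<beta>" and "outer \<beta> \<gamma> - cofactor3 \<delta> = \<delta>"
proof -
  have gram: "\<delta> ** transpose \<delta> = (1 - \<beta> \<bullet> \<beta>) *\<^sub>R mat 1 + outer \<beta> \<beta>"
    and det: "det \<delta> = \<beta> \<bullet> \<beta> - 1"
    using sys by (simp_all add: delta_system_iff)
  show \<beta>: "\<delta> *v \<gamma> = \<beta>"
    unfolding \<gamma> matrix_vector_mul_assoc gram
    by (simp add: matrix_vector_mult_add_rdistrib scaleR_matrix_vector_assoc[symmetric]
        outer_mult_vector algebra_simps)
  have "\<gamma> \<bullet> \<gamma> = \<beta> \<bullet> \<beta>"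
    using \<beta> \<gamma> dot_lmul_matrix[of \<beta> \<delta> \<gamma>] by simp
  then show "1 + \<beta> \<bullet> \<beta> + \<gamma> \<bullet> \<gamma> + trace (\<delta> ** transpose \<delta>) = 4"
    using trace_scaleR_mat_add_outer[of "1 - \<beta> \<bullet> \<beta>" 1 \<beta>] by (simp add: gram)
  define D where "D = outer \<beta> \<gamma> - cofactor3 \<delta> - \<delta>"
  have "D ** transpose \<delta> = 0"
    unfolding D_def matrix_diff_rdistrib outer_mult_transpose cofactor3_mult_transpose \<beta> det gram
    by (simp add: algebra_simps)
  have "D = 0"
  proof (cases "\<beta> \<bullet> \<beta> = 1")
    case True
    then have "\<delta> = outer \<beta> \<gamma>"
      using gram rank_one_if_mult_transpose_eq_outer(1) \<gamma> by simp
    then show ?thesis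
      by (simp add: D_def cofactor3_outer)
  next
    case False
    have "det \<delta> *\<^sub>R D = D ** (transpose \<delta> ** cofactor3 \<delta>)"
      by (simp add: transpose_mult_cofactor3 matrix_scalar_ac)
    also have "\<dots> = 0"
      by (simp add: matrix_mul_assoc \<open>D ** transpose \<delta> = 0\<close>)
    finally show ?thesis
      using False det by simp
  qed
  then show "outer \<beta> \<gamma> - cofactor3 \<delta> = \<delta>"
    by (simp add: D_def)
qed

lemma purification_Pmat_iff:
  "purification (rho \<beta>) (Pmat \<beta> \<gamma> \<delta>) \<longleftrightarrow> \<gamma> = transpose \<delta> *v \<beta> \<and> delta_system \<beta> \<delta>"
  unfolding purification_Pmat_iff_idempotent Pmat_idempotent_iff
  using delta_system_if_idempotency_equations idempotency_equations_if_delta_system by metis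

lemma purification_imp_Pmat:
  assumes "purification (rho \<beta>) P"
  obtains \<gamma> \<delta> where "P = Pmat \<beta> \<gamma> \<delta>"
proof -
  have "hermitian P" and trace: "trace P = 1" and ptrace: "ptrace2 P = rho \<beta>"
    using assms unfolding purification_def pure_state_def by auto
  then obtain c x y z where P: "P = pauli_expansion c x y z"
    using hermitian_imp_pauli_expansion by blast
  from trace have c: "c = 1/4"
    unfolding P trace_pauli_expansion of_real_eq_1_iff by linarith
  from ptrace have "x = (1/4) *\<^sub>R \<beta>"
    unfolding P c ptrace2_pauli_expansion rho_eq_iff by auto
  then have "P = Pmat \<beta> (4 *\<^sub>R y) (4 *\<^sub>R z)"
    by (simp add: P c Pmat_eq_pauli_expansion)
  then show thesis
    by (rule that)
qed

section \<open>Solutions of the system\<close>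

lemma delta_system_det_eq_0_iff:
  assumes "delta_system \<beta> \<delta>"
  shows "det \<delta> = 0 \<longleftrightarrow> norm \<beta> = 1"
  using assms norm_ge_zero[of \<beta>] power2_eq_1_iff[of "norm \<beta>"] unfolding delta_system_def
  by linarith

text \<open>With \<open>s = sqrt (1 - |\<beta>|\<^sup>2)\<close> the symmetric matrix \<open>A = s I + t \<beta>\<beta>\<^sup>T\<close> satisfies
  \<open>A\<^sup>2 = s\<^sup>2 I + (2 s t + t\<^sup>2 |\<beta>|\<^sup>2) \<beta>\<beta>\<^sup>T\<close> and \<open>det A = s\<^sup>2 (s + t |\<beta>|\<^sup>2)\<close>; the choice
  \<open>t = 1 / (1 + s)\<close> makes both brackets equal to 1, and \<open>-A\<close> fixes the sign of the determinant.\<close>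
lemma delta_system_solvable:
  assumes "norm \<beta> \<le> 1"
  shows "delta_system \<beta> (- (sqrt (1 - \<beta> \<bullet> \<beta>) *\<^sub>R mat 1 + (1 / (1 + sqrt (1 - \<beta> \<bullet> \<beta>))) *\<^sub>R outer \<beta> \<beta>))"
proof -
  define s where "s = sqrt (1 - \<beta> \<bullet> \<beta>)"
  define t where "t = 1 / (1 + s)"
  have "\<beta> \<bullet> \<beta> \<le> 1"
    using assms by (metis power2_norm_eq_inner norm_ge_zero power_le_one)
  then have "s \<ge> 0" and s2: "s\<^sup>2 = 1 - \<beta> \<bullet> \<beta>"
    by (simp_all add: s_def)
  then have tb: "t * (\<beta> \<bullet> \<beta>) = 1 - s"
    by (simp add: t_def field_simps power2_eq_square)
  have coeff: "t * (2 * s + t * (\<beta> \<bullet> \<beta>)) = 1"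
    unfolding tb using \<open>s \<ge> 0\<close> by (simp add: t_def field_simps)
  define A where "A = - (s *\<^sub>R mat 1 + t *\<^sub>R outer \<beta> \<beta>)"
  have "A ** transpose A = s\<^sup>2 *\<^sub>R mat 1 + (t * (2 * s + t * (\<beta> \<bullet> \<beta>))) *\<^sub>R outer \<beta> \<beta>"
    unfolding A_def by (simp add: matrix3_simps algebra_simps power2_eq_square)
  also have "\<dots> = (1 - \<beta> \<bullet> \<beta>) *\<^sub>R mat 1 + outer \<beta> \<beta>"
    by (simp only: s2 coeff scaleR_one)
  finally have "A ** transpose A = (1 - \<beta> \<bullet> \<beta>) *\<^sub>R mat 1 + outer \<beta> \<beta>" .
  moreover have "det A = \<beta> \<bullet> \<beta> - 1"
    unfolding A_def det3_uminus det3_scaleR_mat_add_outer tb s2 by simp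
  ultimately have "delta_system \<beta> A"
    by (simp add: delta_system_iff)
  then show ?thesis
    by (simp add: A_def s_def t_def)
qed

lemma delta_system_mult_rotation:
  assumes "delta_system \<beta> \<delta>" and "rotation_matrix S"
  shows "delta_system \<beta> (\<delta> ** S)"
  using assms gram_det_mult_rotation unfolding delta_system_def by metis

lemma delta_system_unit_iff:
  assumes "norm \<beta> = 1"
  shows "delta_system \<beta> \<delta> \<longleftrightarrow> (\<exists>g \<in> sphere 0 1. \<delta> = outer \<beta> g)"
proof -
  have unit: "\<beta> \<bullet> \<beta> = 1"
    using assms by (simp add: power2_norm_eq_inner[symmetric])
  have "delta_system \<beta> (outer \<beta> g)" if "norm g = 1" for g
    using that unit by (simp add: delta_system_iff transpose_outer outer_mult_outer det_outer3
        power2_norm_eq_inner[symmetric])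
  moreover have "\<exists>g \<in> sphere 0 1. \<delta> = outer \<beta> g" if "delta_system \<beta> \<delta>"
    using that unit rank_one_if_mult_transpose_eq_outer[of \<delta> \<beta>] by (auto simp: delta_system_iff)
  ultimately show ?thesis
    by auto
qed

lemma delta_system_solutions:
  assumes sys0: "delta_system \<beta> \<delta>0"
  shows "{\<delta>. delta_system \<beta> \<delta>} = {\<delta>0 ** S | S. rotation_matrix S}"
proof (intro equalityI subsetI)
  fix \<delta>
  assume "\<delta> \<in> {\<delta>. delta_system \<beta> \<delta>}"
  then have sys: "delta_system \<beta> \<delta>"
    by simp
  show "\<delta> \<in> {\<delta>0 ** S | S. rotation_matrix S}"
  proof (cases "norm \<beta> = 1")
    case True
    then obtain u v where u: "norm u = 1" "\<delta> = outer \<beta> u" and v: "norm v = 1" "\<delta>0 = outer \<beta> v"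
      using sys sys0 delta_system_unit_iff by (metis mem_sphere_0)
    obtain S where S: "rotation_matrix S" "transpose S *v v = u"
      using rotation_matrix_transpose_maps[of v u] u v by auto
    have "\<delta> = \<delta>0 ** S"
      using outer_mult_transpose[of \<beta> v "transpose S"] u v S by simp
    with S show ?thesis
      by blast
  next
    case False
    then have "det \<delta>0 \<noteq> 0"
      using sys0 delta_system_det_eq_0_iff by blast
    then obtain S where "rotation_matrix S" "\<delta> = \<delta>0 ** S"
      using rotation_factor_if_same_gram[of \<delta>0 \<delta>] sys sys0 by (auto simp: delta_system_iff)
    then show ?thesis
      by blast
  qed
qed (use assms delta_system_mult_rotation in blast)

lemma bij_betw_delta_system_purifications:
  "bij_betw (\<lambda>\<delta>. Pmat \<beta> (transpose \<delta> *v \<beta>) \<delta>) {\<delta>. delta_system \<beta> \<delta>} {P. purification (rho \<beta>) P}"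
proof (rule bij_betw_imageI)
  show "inj_on (\<lambda>\<delta>. Pmat \<beta> (transpose \<delta> *v \<beta>) \<delta>) {\<delta>. delta_system \<beta> \<delta>}"
    by (rule inj_onI) (simp add: Pmat_eq_iff)
  show "(\<lambda>\<delta>. Pmat \<beta> (transpose \<delta> *v \<beta>) \<delta>) ` {\<delta>. delta_system \<beta> \<delta>} = {P. purification (rho \<beta>) P}"
  proof (intro equalityI subsetI)
    fix P
    assume "P \<in> {P. purification (rho \<beta>) P}"
    then obtain \<gamma> \<delta> where P: "P = Pmat \<beta> \<gamma> \<delta>" and "purification (rho \<beta>) (Pmat \<beta> \<gamma> \<delta>)"
      using purification_imp_Pmat by (metis mem_Collect_eq)
    then have "\<gamma> = transpose \<delta> *v \<beta>" and "delta_system \<beta> \<delta>"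
      by (simp_all add: purification_Pmat_iff)
    with P show "P \<in> (\<lambda>\<delta>. Pmat \<beta> (transpose \<delta> *v \<beta>) \<delta>) ` {\<delta>. delta_system \<beta> \<delta>}"
      by blast
  qed (auto simp: purification_Pmat_iff)
qed

lemma bij_betw_rotations_delta_system:
  assumes "norm \<beta> \<noteq> 1" and sys0: "delta_system \<beta> \<delta>0"
  shows "bij_betw (\<lambda>S. \<delta>0 ** S) {S. rotation_matrix S} {\<delta>. delta_system \<beta> \<delta>}"
proof (rule bij_betw_imageI)
  have "det \<delta>0 \<noteq> 0"
    using assms delta_system_det_eq_0_iff by blast
  then obtain B where B: "B ** \<delta>0 = mat 1"
    using invertible_det_nz invertible_left_inverse by blast
  show "inj_on (\<lambda>S. \<delta>0 ** S) {S. rotation_matrix S}"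
  proof (rule inj_onI)
    fix S S'
    assume "\<delta>0 ** S = \<delta>0 ** S'"
    then have "(B ** \<delta>0) ** S = (B ** \<delta>0) ** S'"
      by (simp add: matrix_mul_assoc[symmetric])
    then show "S = S'"
      by (simp add: B)
  qed
  show "(\<lambda>S. \<delta>0 ** S) ` {S. rotation_matrix S} = {\<delta>. delta_system \<beta> \<delta>}"
    unfolding delta_system_solutions[OF sys0] by blast
qed

lemma bij_betw_sphere_delta_system:
  assumes "norm \<beta> = 1"
  shows "bij_betw (outer \<beta>) (sphere 0 1) {\<delta>. delta_system \<beta> \<delta>}"
proof (rule bij_betw_imageI)
  have recover: "transpose (outer \<beta> g) *v \<beta> = g" for g
    using assms by (simp add: transpose_outer outer_mult_vector power2_norm_eq_inner[symmetric])
  show "inj_on (outer \<beta>) (sphere 0 1)"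
    by (rule inj_onI) (metis recover)
  show "outer \<beta> ` sphere 0 1 = {\<delta>. delta_system \<beta> \<delta>}"
    using delta_system_unit_iff[OF assms] by blast
qed

theorem theorem2p1:
  fixes \<beta> :: "real^3"
  assumes "norm \<beta> \<le> 1"
  shows
    "(\<forall>\<gamma> \<delta>. purification (rho \<beta>) (Pmat \<beta> \<gamma> \<delta>) \<longleftrightarrow>
              \<gamma> = transpose \<delta> *v \<beta> \<and> delta_system \<beta> \<delta>)
   \<and> (\<forall>P. purification (rho \<beta>) P \<longrightarrow> (\<exists>\<gamma> \<delta>. P = Pmat \<beta> \<gamma> \<delta>))
   \<and> (\<exists>\<delta>. delta_system \<beta> \<delta>)
   \<and> (\<forall>\<delta>0. delta_system \<beta> \<delta>0 \<longrightarrow>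
          {\<delta>. delta_system \<beta> \<delta>} = {\<delta>0 ** S | S. rotation_matrix S})
   \<and> (norm \<beta> < 1 \<longrightarrow>
        (\<forall>\<delta>0. delta_system \<beta> \<delta>0 \<longrightarrow>
           bij_betw (\<lambda>S. Pmat \<beta> (transpose (\<delta>0 ** S) *v \<beta>) (\<delta>0 ** S))
                    {S. rotation_matrix S} {P. purification (rho \<beta>) P}))
   \<and> (norm \<beta> = 1 \<longrightarrow>
        (\<exists>f. bij_betw f (sphere (0 :: real^3) 1) {P. purification (rho \<beta>) P}))"
proof (intro conjI allI impI)
  show "purification (rho \<beta>) (Pmat \<beta> \<gamma> \<delta>) \<longleftrightarrow> \<gamma> = transpose \<delta> *v \<beta> \<and> delta_system \<beta> \<delta>"
    for \<gamma> \<delta>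
    by (rule purification_Pmat_iff)
  show "\<exists>\<gamma> \<delta>. P = Pmat \<beta> \<gamma> \<delta>" if "purification (rho \<beta>) P" for P
    using purification_imp_Pmat[OF that] by metis
  show "\<exists>\<delta>. delta_system \<beta> \<delta>"
    using delta_system_solvable[OF assms] by blast
  show "{\<delta>. delta_system \<beta> \<delta>} = {\<delta>0 ** S | S. rotation_matrix S}" if "delta_system \<beta> \<delta>0" for \<delta>0
    using that by (rule delta_system_solutions)
  show "bij_betw (\<lambda>S. Pmat \<beta> (transpose (\<delta>0 ** S) *v \<beta>) (\<delta>0 ** S))
      {S. rotation_matrix S} {P. purification (rho \<beta>) P}"
    if "norm \<beta> < 1" and "delta_system \<beta> \<delta>0" for \<delta>0
    using bij_betw_trans[OF bij_betw_rotations_delta_system bij_betw_delta_system_purifications] that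
    by (simp add: o_def)
  show "\<exists>f. bij_betw f (sphere (0 :: real^3) 1) {P. purification (rho \<beta>) P}" if "norm \<beta> = 1"
    using bij_betw_trans[OF bij_betw_sphere_delta_system[OF that] bij_betw_delta_system_purifications]
    by auto
qed

end
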